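(* Let $N \ge 1$ be an integer and let $a, b$ be $N$-bit integers in two's complement representation, with bits $a_0 a_1 \cdots a_{N-1}$ and $b_0 b_1 \cdots b_{N-1}$, where bit $0$ is the most significant bit. Define the bipolar encodings $\hat{a}_j = 2a_j - 1 \in \{-1,+1\}$ and $\hat{b}_j = 2b_j - 1 \in \{-1,+1\}$ for $0 \le j \le N-1$. For each $i$ with $0 \le i \le N-1$ set \[ D_i = \sum_{j=i}^{N-1} \bigl(\hat{a}_j - \hat{b}_j\bigr)\, 2^{N-2-j}, \qquad P = 2^{N-1-i}, \] \[ z_1 = D_i + P + 1,\quad z_2 = D_i + P,\quad z_3 = -D_i,\quad z_4 = -D_i - 1,\quad z_5 = D_i - P + 1,\quad z_6 = D_i - P, \] and \[ r_i = 2\bigl[\mathrm{ReLU}(z_1) - \mathrm{ReLU}(z_2) + \mathrm{ReLU}(z_3) - \mathrm{ReLU}(z_4) + \mathrm{ReLU}(z_5) - \mathrm{ReLU}(z_6)\bigr] - 3, \] where $\mathrm{ReLU}(t) = \max(t,0)$. Then for every $i \in \{0,\dots,N-1\}$ we have $r_i \in \{-1,+1\}$, and $r_i = 2c_i - 1$, where $c_i$ is bit $i$ (bit $0$ being the most significant) of the $N$-bit two's complement representation of $a - b$ (computed modulo $2^N$).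
   Context: Bipolar encoding maps a binary digit $0$ to $-1$ and $1$ to $+1$. An $N$-bit two's complement integer is represented by its bit string $b_0 b_1\cdots b_{N-1}$ with $b_0$ the most significant bit; the difference $a-b$ is taken in $N$-bit two's complement arithmetic, i.e. modulo $2^N$ (wrapping on overflow). *)

theory Defs
  imports Complex_Main
begin

definition relu :: "real \<Rightarrow> real" where
  "relu t = max t 0"

text \<open>Bits are indexed 0..N-1 with bit 0 the most significant; bit values are 0 or 1.\<close>

definition tc_value :: "nat \<Rightarrow> (nat \<Rightarrow> int) \<Rightarrow> int" where
  "tc_value N x = - x 0 * 2 ^ (N - 1) + (\<Sum>j\<in>{1..<N}. x j * 2 ^ (N - 1 - j))"

definition tc_bit :: "nat \<Rightarrow> int \<Rightarrow> nat \<Rightarrow> int" where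
  "tc_bit N v i = ((v mod 2 ^ N) div 2 ^ (N - 1 - i)) mod 2"

definition bipolar :: "int \<Rightarrow> real" where
  "bipolar x = 2 * real_of_int x - 1"

definition D_val :: "nat \<Rightarrow> (nat \<Rightarrow> int) \<Rightarrow> (nat \<Rightarrow> int) \<Rightarrow> nat \<Rightarrow> real" where
  "D_val N a b i = (\<Sum>j\<in>{i..<N}. (bipolar (a j) - bipolar (b j)) * 2 powi (int N - 2 - int j))"

definition r_val :: "nat \<Rightarrow> (nat \<Rightarrow> int) \<Rightarrow> (nat \<Rightarrow> int) \<Rightarrow> nat \<Rightarrow> real" where
  "r_val N a b i =
     (let D = D_val N a b i; P = (2::real) ^ (N - 1 - i);
          z1 = D + P + 1; z2 = D + P; z3 = - D; z4 = - D - 1; z5 = D - P + 1; z6 = D - P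
      in 2 * (relu z1 - relu z2 + relu z3 - relu z4 + relu z5 - relu z6) - 3)"

end

theory Submission
  imports Defs
begin

(* Write P = 2^(N-1-i). D_i equals the difference D of the unsigned values of the suffixes
   a_i..a_{N-1} and b_i..b_{N-1}, so |D| < 2P, and a - b is congruent to D modulo 2P. Hence bit i
   of a - b, which is bit N-1-i counted from the least significant end, is the corresponding bit
   of D, and for |D| < 2P that bit is set iff P <= D or -P <= D < 0. On integers each difference
   ReLU(x+1) - ReLU(x) is the step [x >= 0], so r_i = 2([D >= -P] + [D < 0] + [D >= P]) - 3,
   which is 1 exactly on those two ranges and -1 elsewhere. *)

definition suffix_value :: "nat \<Rightarrow> (nat \<Rightarrow> int) \<Rightarrow> nat \<Rightarrow> int" where
  "suffix_value N x i = (\<Sum>j\<in>{i..<N}. x j * 2 ^ (N - 1 - j))"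

lemma suffix_value_bounds:
  assumes bits: "\<And>j. j < N \<Longrightarrow> x j \<in> {0, 1}" and "i \<le> N"
  shows "0 \<le> suffix_value N x i \<and> suffix_value N x i < 2 ^ (N - i)"
  using \<open>i \<le> N\<close>
proof (induction i rule: inc_induct)
  case base
  show ?case by (simp add: suffix_value_def)
next
  case (step i)
  have "suffix_value N x i = x i * 2 ^ (N - 1 - i) + suffix_value N x (Suc i)"
    using step.hyps by (simp add: suffix_value_def sum.atLeast_Suc_lessThan)
  moreover have "(2::int) ^ (N - i) = 2 * 2 ^ (N - Suc i)"
    using step.hyps by (simp flip: power_Suc add: Suc_diff_Suc)
  moreover have "x i \<in> {0, 1}" using bits step.hyps by simp
  ultimately show ?case using step.IH by auto
qed

lemma suffix_value_diff_bounds: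
  assumes "\<And>j. j < N \<Longrightarrow> a j \<in> {0, 1}" "\<And>j. j < N \<Longrightarrow> b j \<in> {0, 1}" "i \<le> N"
  shows "\<bar>suffix_value N a i - suffix_value N b i\<bar> < 2 ^ (N - i)"
  using suffix_value_bounds[of N a i] suffix_value_bounds[of N b i] assms by auto

lemma tc_value_eq_suffix_value:
  assumes "N \<ge> 1"
  shows "tc_value N x = suffix_value N x 0 - x 0 * 2 ^ N"
proof -
  have "suffix_value N x 0 = x 0 * 2 ^ (N - 1) + (\<Sum>j\<in>{1..<N}. x j * 2 ^ (N - 1 - j))"
    using assms by (simp add: suffix_value_def sum.atLeast_Suc_lessThan)
  moreover have "(2::int) ^ N = 2 * 2 ^ (N - 1)"
    using assms by (simp flip: power_Suc)
  ultimately show ?thesis by (simp add: tc_value_def)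
qed

lemma suffix_value_dvd_diff:
  assumes "i \<le> N"
  shows "2 ^ (N - i) dvd suffix_value N x 0 - suffix_value N x i"
proof -
  have "suffix_value N x 0 = (\<Sum>j\<in>{0..<i}. x j * 2 ^ (N - 1 - j)) + suffix_value N x i"
    unfolding suffix_value_def using assms by (simp add: sum.atLeastLessThan_concat)
  moreover have "2 ^ (N - i) dvd (\<Sum>j\<in>{0..<i}. x j * 2 ^ (N - 1 - j))"
  proof (rule dvd_sum)
    fix j assume "j \<in> {0..<i}"
    then show "2 ^ (N - i) dvd x j * 2 ^ (N - 1 - j)"
      using assms by (simp add: le_imp_power_dvd)
  qed
  ultimately show ?thesis by simp
qed

lemma tc_value_mod_eq:
  assumes "N \<ge> 1" "i \<le> N"
  shows "tc_value N x mod 2 ^ (N - i) = suffix_value N x i mod 2 ^ (N - i)"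
proof -
  have "(2::int) ^ (N - i) dvd x 0 * 2 ^ N" by (simp add: le_imp_power_dvd)
  with suffix_value_dvd_diff[OF \<open>i \<le> N\<close>, of x]
  have "2 ^ (N - i) dvd tc_value N x - suffix_value N x i"
    unfolding tc_value_eq_suffix_value[OF \<open>N \<ge> 1\<close>]
    by (metis diff_right_commute dvd_diff)
  then show ?thesis by (simp add: mod_eq_dvd_iff)
qed

lemma tc_bit_eq_bit:
  assumes "i < N"
  shows "tc_bit N v i = of_bool (bit v (N - 1 - i))"
  unfolding tc_bit_def take_bit_eq_mod[symmetric] of_bool_odd_eq_mod_2[symmetric] bit_iff_odd[symmetric]
  using assms by (simp add: bit_take_bit_iff)

lemma bit_eq_if_mod_eq:
  fixes v w :: int
  assumes "v mod 2 ^ Suc k = w mod 2 ^ Suc k"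
  shows "bit v k \<longleftrightarrow> bit w k"
  by (metis assms bit_take_bit_iff lessI take_bit_eq_mod)

lemma bit_int_in_range:
  fixes d :: int
  assumes "- (2 ^ Suc k) \<le> d" "d < 2 ^ Suc k"
  shows "bit d k \<longleftrightarrow> 2 ^ k \<le> d \<or> (- (2 ^ k) \<le> d \<and> d < 0)"
proof -
  define P :: int where "P = 2 ^ k"
  have "P > 0" by (simp add: P_def)
  have div_eq: "d div P = q" if "P * q \<le> d" "d < P * q + P" for q
    using int_div_pos_eq[of d P q "d - P * q"] that by simp
  have range: "- (2 * P) \<le> d" "d < 2 * P" using assms by (simp_all add: P_def)
  have "bit d k \<longleftrightarrow> odd (d div P)" by (simp add: P_def bit_iff_odd)
  also have "\<dots> \<longleftrightarrow> P \<le> d \<or> (- P \<le> d \<and> d < 0)"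
  proof -
    consider "P \<le> d" | "0 \<le> d" "d < P" | "- P \<le> d" "d < 0" | "d < - P" by linarith
    then show ?thesis
    proof cases
      case 1 with range have "d div P = 1" by (intro div_eq) simp_all
      with 1 show ?thesis by simp
    next
      case 2 then have "d div P = 0" by (intro div_eq) simp_all
      with 2 show ?thesis by simp
    next
      case 3 then have "d div P = -1" by (intro div_eq) simp_all
      with 3 show ?thesis by simp
    next
      case 4 with range have "d div P = -2" by (intro div_eq) simp_all
      with 4 \<open>P > 0\<close> show ?thesis by simp
    qed
  qed
  finally show ?thesis by (simp add: P_def)
qed

lemma D_val_eq_suffix_value_diff:
  "D_val N a b i = of_int (suffix_value N a i - suffix_value N b i)"
  unfolding D_val_def suffix_value_def of_int_diff of_int_sum sum_subtractf[symmetric]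
proof (rule sum.cong)
  fix j assume "j \<in> {i..<N}"
  then have "int (N - 1 - j) = (int N - 2 - int j) + 1" by auto
  then have "(2::real) ^ (N - 1 - j) = 2 powi (int N - 2 - int j) * 2"
    by (metis power_int_add_1 power_int_of_nat zero_neq_numeral)
  then show "(bipolar (a j) - bipolar (b j)) * 2 powi (int N - 2 - int j) =
      of_int (a j * 2 ^ (N - 1 - j)) - of_int (b j * 2 ^ (N - 1 - j))"
    by (simp add: bipolar_def algebra_simps)
qed simp

lemma relu_succ_diff: "relu (of_int x + 1) - relu (of_int x) = of_bool (0 \<le> x)"
  by (simp add: relu_def max_def)

lemma r_val_eq_step_count:
  assumes "D_val N a b i = of_int d"
  shows "r_val N a b i =
    2 * (of_bool (- (2 ^ (N - 1 - i)) \<le> d) + of_bool (d < 0) + of_bool (2 ^ (N - 1 - i) \<le> d)) - 3"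
proof -
  define P :: int where "P = 2 ^ (N - 1 - i)"
  have "relu (of_int d + of_int P + 1) - relu (of_int d + of_int P) = of_bool (- P \<le> d)"
    using relu_succ_diff[of "d + P"] by simp
  moreover have "relu (- of_int d) - relu (- of_int d - 1) = of_bool (d < 0)"
    using relu_succ_diff[of "- d - 1"] by simp
  moreover have "relu (of_int d - of_int P + 1) - relu (of_int d - of_int P) = of_bool (P \<le> d)"
    using relu_succ_diff[of "d - P"] by simp
  ultimately show ?thesis
    unfolding r_val_def Let_def assms by (simp add: P_def algebra_simps)
qed

lemma step_count_eq_bipolar_bit:
  fixes d :: int
  assumes "\<bar>d\<bar> < 2 ^ Suc k"
  shows "2 * (of_bool (- (2 ^ k) \<le> d) + of_bool (d < 0) + of_bool (2 ^ k \<le> d)) - 3 =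
    2 * of_bool (bit d k) - (1::real)"
proof -
  define P :: int where "P = 2 ^ k"
  have "P > 0" "\<bar>d\<bar> < 2 * P" using assms by (simp_all add: P_def)
  moreover have "bit d k \<longleftrightarrow> P \<le> d \<or> (- P \<le> d \<and> d < 0)"
    using bit_int_in_range[of k d] assms by (simp add: P_def abs_less_iff)
  ultimately show ?thesis unfolding P_def[symmetric] by auto
qed

theorem proposition1:
  fixes N :: nat and a b :: "nat \<Rightarrow> int"
  assumes "N \<ge> 1"
    and "\<And>j. j < N \<Longrightarrow> a j \<in> {0, 1}"
    and "\<And>j. j < N \<Longrightarrow> b j \<in> {0, 1}"
  shows "\<forall>i < N. r_val N a b i \<in> {-1, 1} \<and>
           r_val N a b i = 2 * real_of_int (tc_bit N (tc_value N a - tc_value N b) i) - 1"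
proof (intro allI impI)
  fix i assume "i < N"
  define k where "k = N - 1 - i"
  define d where "d = suffix_value N a i - suffix_value N b i"
  have width: "N - i = Suc k" using \<open>i < N\<close> by (simp add: k_def)
  have range: "\<bar>d\<bar> < 2 ^ Suc k"
    using suffix_value_diff_bounds[of N a b i] assms \<open>i < N\<close> by (simp add: d_def width)
  have "r_val N a b i =
      2 * (of_bool (- (2 ^ k) \<le> d) + of_bool (d < 0) + of_bool (2 ^ k \<le> d)) - 3"
    using r_val_eq_step_count[of N a b i d] by (simp add: D_val_eq_suffix_value_diff d_def k_def)
  also have "\<dots> = 2 * of_bool (bit d k) - 1"
    using range by (rule step_count_eq_bipolar_bit)
  finally have r: "r_val N a b i = 2 * of_bool (bit d k) - 1" .
  have "(tc_value N a - tc_value N b) mod 2 ^ (N - i) = d mod 2 ^ (N - i)"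
    unfolding d_def using tc_value_mod_eq[OF assms(1)] \<open>i < N\<close> by (intro mod_diff_cong) auto
  then have "bit (tc_value N a - tc_value N b) k \<longleftrightarrow> bit d k"
    by (intro bit_eq_if_mod_eq) (simp only: width)
  then have "tc_bit N (tc_value N a - tc_value N b) i = of_bool (bit d k)"
    using tc_bit_eq_bit[OF \<open>i < N\<close>] by (simp add: k_def)
  with r show "r_val N a b i \<in> {-1, 1} \<and>
      r_val N a b i = 2 * real_of_int (tc_bit N (tc_value N a - tc_value N b) i) - 1"
    by simp
qed

end
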